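(* Let $n\ge 2k\ge 2$, let $S\subseteq\{0,1,\ldots,k-1\}$ be nonempty, and let $X=\bigcup_{i\in S}J(n,k,i)$ (the graph on the $k$-subsets of $\{1,\ldots,n\}$ in which $A\sim B$ iff $|A\cap B|\in S$). If there is perfect state transfer in $X$ between two distinct vertices $A$ and $B$, then $B=\{1,\ldots,n\}\setminus A$.
   Context: $J(n,k,i)$ is the graph on the $k$-subsets of $\{1,\ldots,n\}$ with $A\sim B$ iff $|A\cap B|=i$. For a simple graph $X$ with adjacency matrix $A$, let $\mathcal{H}_X(t)=e^{itA}$; there is perfect state transfer between vertices $u\ne v$ if $|\mathcal{H}_X(\tau)_{u,v}|=1$ for some $\tau>0$. *)

theory Defs
  imports "HOL-Analysis.Analysis"
begin

text \<open>Matrices indexed by a finite vertex set V are represented as functions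
  'a => 'a => complex; only entries with indices in V are meaningful.\<close>

definition mat_mult :: "'a set \<Rightarrow> ('a \<Rightarrow> 'a \<Rightarrow> complex) \<Rightarrow> ('a \<Rightarrow> 'a \<Rightarrow> complex) \<Rightarrow> ('a \<Rightarrow> 'a \<Rightarrow> complex)" where
  "mat_mult V M N = (\<lambda>u v. \<Sum>w\<in>V. M u w * N w v)"

fun mat_pow :: "'a set \<Rightarrow> ('a \<Rightarrow> 'a \<Rightarrow> complex) \<Rightarrow> nat \<Rightarrow> ('a \<Rightarrow> 'a \<Rightarrow> complex)" where
  "mat_pow V M 0 = (\<lambda>u v. if u = v then 1 else 0)"
| "mat_pow V M (Suc m) = mat_mult V M (mat_pow V M m)"

definition mat_exp :: "'a set \<Rightarrow> ('a \<Rightarrow> 'a \<Rightarrow> complex) \<Rightarrow> ('a \<Rightarrow> 'a \<Rightarrow> complex)" where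
  "mat_exp V M = (\<lambda>u v. \<Sum>m. mat_pow V M m u v / of_nat (fact m))"

definition adj_matrix :: "('a \<Rightarrow> 'a \<Rightarrow> bool) \<Rightarrow> ('a \<Rightarrow> 'a \<Rightarrow> complex)" where
  "adj_matrix E = (\<lambda>u v. if E u v then 1 else 0)"

definition transition :: "'a set \<Rightarrow> ('a \<Rightarrow> 'a \<Rightarrow> bool) \<Rightarrow> real \<Rightarrow> ('a \<Rightarrow> 'a \<Rightarrow> complex)" where
  "transition V E t = mat_exp V (\<lambda>u v. \<i> * of_real t * adj_matrix E u v)"

definition perfect_state_transfer :: "'a set \<Rightarrow> ('a \<Rightarrow> 'a \<Rightarrow> bool) \<Rightarrow> 'a \<Rightarrow> 'a \<Rightarrow> bool" where
  "perfect_state_transfer V E u v \<longleftrightarrow>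
     u \<in> V \<and> v \<in> V \<and> u \<noteq> v \<and> (\<exists>\<tau>>0. cmod (transition V E \<tau> u v) = 1)"

definition ksubsets :: "nat \<Rightarrow> nat \<Rightarrow> nat set set" where
  "ksubsets n k = {A. A \<subseteq> {1..n} \<and> card A = k}"

text \<open>Adjacency of the union over i in S of J(n,k,i): |A \<inter> B| \<in> S (and A \<noteq> B,
  automatic when S \<subseteq> {0..k-1}).\<close>
definition johnson_union_adj :: "nat set \<Rightarrow> nat set \<Rightarrow> nat set \<Rightarrow> bool" where
  "johnson_union_adj S A B \<longleftrightarrow> A \<noteq> B \<and> card (A \<inter> B) \<in> S"

end

theory Submission
  imports Defs
begin

text \<open>The transition matrix \<open>e\<^sup>i\<^sup>t\<^sup>A\<close> is unitary, so if one entry of row \<open>A\<close> has modulus 1, all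
  other entries of that row vanish: perfect state transfer from \<open>A\<close> can only reach one vertex.
  Every permutation of \<open>{1..n}\<close> induces an automorphism of the graph, and automorphisms fixing
  \<open>A\<close> must therefore also fix \<open>B\<close>. Unless \<open>B\<close> is the complement of \<open>A\<close>, some transposition
  fixes \<open>A\<close> but moves \<open>B\<close>.\<close>

lemma mat_mult_assoc:
  "mat_mult V (mat_mult V M N) P = mat_mult V M (mat_mult V N P)"
  unfolding mat_mult_def
  by (auto simp: sum_distrib_left sum_distrib_right mult.assoc intro!: ext sum.swap)

lemma mat_pow_add:
  assumes "finite V" "u \<in> V"
  shows "mat_mult V (mat_pow V M i) (mat_pow V M j) u v = mat_pow V M (i + j) u v"
  using assms(2)
proof (induction i arbitrary: u)
  case 0
  then show ?case by (simp add: mat_mult_def if_distrib[of "\<lambda>x. x * _"] assms(1) cong: if_cong)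
next
  case (Suc i)
  have "mat_mult V (mat_pow V M (Suc i)) (mat_pow V M j) u v
      = mat_mult V M (mat_mult V (mat_pow V M i) (mat_pow V M j)) u v"
    by (simp add: mat_mult_assoc)
  also have "\<dots> = mat_mult V M (mat_pow V M (i + j)) u v"
    unfolding mat_mult_def[of V M] using Suc.IH by (auto intro!: sum.cong)
  finally show ?case by simp
qed

lemma mat_pow_one:
  assumes "finite V" "v \<in> V"
  shows "mat_pow V M 1 u v = M u v"
  using assms by (simp add: mat_mult_def if_distrib[of "\<lambda>x. _ * x"] cong: if_cong)

lemma mat_pow_uminus:
  "mat_pow V (\<lambda>u v. - M u v) m = (\<lambda>u v. (-1)^m * mat_pow V M m u v)"
  by (induction m) (auto simp: mat_mult_def sum_distrib_left intro!: ext sum.cong)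

lemma mat_pow_cnj:
  "cnj (mat_pow V M m u v) = mat_pow V (\<lambda>u v. cnj (M u v)) m u v"
  by (induction m arbitrary: u v) (auto simp: mat_mult_def)

lemma mat_pow_transpose:
  assumes fin: "finite V" and "u \<in> V" "v \<in> V"
  shows "mat_pow V (\<lambda>u v. M v u) m u v = mat_pow V M m v u"
  using assms(2,3)
proof (induction m arbitrary: u v)
  case 0
  then show ?case by auto
next
  case (Suc m)
  have "mat_pow V (\<lambda>u v. M v u) (Suc m) u v = (\<Sum>w\<in>V. M w u * mat_pow V (\<lambda>u v. M v u) m w v)"
    by (simp add: mat_mult_def)
  also have "\<dots> = (\<Sum>w\<in>V. mat_pow V M m v w * M w u)"
    using Suc by (auto simp: mult.commute intro!: sum.cong)
  also have "\<dots> = mat_mult V (mat_pow V M m) (mat_pow V M 1) v u"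
    by (simp only: mat_mult_def mat_pow_one[OF fin Suc.prems(1)])
  also have "\<dots> = mat_pow V M (Suc m) v u"
    using mat_pow_add[OF fin Suc.prems(2), of M m 1 u] by (simp only: Suc_eq_plus1)
  finally show ?case .
qed

lemma mat_pow_bound:
  assumes "\<And>a b. a \<in> V \<Longrightarrow> b \<in> V \<Longrightarrow> cmod (M a b) \<le> Bd" "0 \<le> Bd" "u \<in> V"
  shows "cmod (mat_pow V M m u v) \<le> (real (card V) * Bd) ^ m"
  using assms(3)
proof (induction m arbitrary: u)
  case 0
  then show ?case by auto
next
  case (Suc m)
  have "cmod (mat_pow V M (Suc m) u v) \<le> (\<Sum>w\<in>V. cmod (M u w) * cmod (mat_pow V M m w v))"
    unfolding norm_mult[symmetric] by (simp add: mat_mult_def norm_sum)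
  also have "\<dots> \<le> (\<Sum>w\<in>V. Bd * (real (card V) * Bd) ^ m)"
    using assms Suc by (intro sum_mono mult_mono) auto
  also have "\<dots> = (real (card V) * Bd) ^ Suc m" by simp
  finally show ?case .
qed

lemma mat_exp_summable:
  assumes "finite V" "u \<in> V"
  shows "summable (\<lambda>m. cmod (mat_pow V M m u v / of_nat (fact m)))"
proof (rule summable_comparison_test)
  define Bd where "Bd = (\<Sum>a\<in>V. \<Sum>b\<in>V. cmod (M a b))"
  have "cmod (M a b) \<le> Bd" if "a \<in> V" "b \<in> V" for a b
  proof -
    have "cmod (M a b) \<le> (\<Sum>b\<in>V. cmod (M a b))"
      using assms(1) that by (intro member_le_sum) auto
    also have "\<dots> \<le> Bd"
      unfolding Bd_def using assms(1) that
      by (intro member_le_sum[of a V "\<lambda>a. \<Sum>b\<in>V. cmod (M a b)"] sum_nonneg) auto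
    finally show ?thesis .
  qed
  moreover have "0 \<le> Bd" unfolding Bd_def by (intro sum_nonneg) auto
  ultimately show "\<exists>N. \<forall>m\<ge>N. norm (cmod (mat_pow V M m u v / of_nat (fact m)))
      \<le> inverse (fact m) * (real (card V) * Bd) ^ m"
    using mat_pow_bound[of V M Bd u, OF _ _ assms(2)] by (auto simp: norm_divide divide_simps)
  show "summable (\<lambda>m. inverse (fact m) * (real (card V) * Bd) ^ m)" by (rule summable_exp)
qed

lemma mat_exp_mult_mat_exp_uminus:
  assumes fin: "finite V" and u: "u \<in> V"
  shows "(\<Sum>w\<in>V. mat_exp V M u w * mat_exp V (\<lambda>a b. - M a b) w v) = (if u = v then 1 else 0)"
proof -
  define a where "a = (\<lambda>w m. mat_pow V M m u w / of_nat (fact m))"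
  define b where "b = (\<lambda>w m. mat_pow V (\<lambda>a b. - M a b) m w v / of_nat (fact m))"
  define c where "c = (\<lambda>w m. \<Sum>i\<le>m. a w i * b w (m - i))"
  have sa: "summable (\<lambda>m. norm (a w m))" for w
    unfolding a_def using mat_exp_summable[OF fin u] by simp
  have sb: "summable (\<lambda>m. norm (b w m))" if "w \<in> V" for w
    unfolding b_def using mat_exp_summable[OF fin that] by simp
  have cauchy: "mat_exp V M u w * mat_exp V (\<lambda>a b. - M a b) w v = (\<Sum>m. c w m)"
    and sc: "summable (c w)" if "w \<in> V" for w
    using Cauchy_product[OF sa sb[OF that]] summable_Cauchy_product[OF sa sb[OF that]]
    by (simp_all add: mat_exp_def a_def b_def c_def)
  txt \<open>The \<open>m\<close>-th Cauchy coefficient is \<open>M\<^sup>m (1 + (-1))\<^sup>m / m!\<close>.\<close>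
  have coeff: "(\<Sum>w\<in>V. c w m) = (if m = 0 then mat_pow V M 0 u v else 0)" for m
  proof -
    have "(\<Sum>w\<in>V. c w m) = (\<Sum>i\<le>m. ((-1)^(m-i) / (of_nat (fact i) * of_nat (fact (m-i)))) *
              mat_mult V (mat_pow V M i) (mat_pow V M (m-i)) u v)"
      unfolding c_def a_def b_def mat_pow_uminus mat_mult_def
      by (subst sum.swap) (auto simp: sum_distrib_left intro!: sum.cong)
    also have "\<dots> = (\<Sum>i\<le>m. ((-1)^(m-i) / (of_nat (fact i) * of_nat (fact (m-i)))) * mat_pow V M m u v)"
      using mat_pow_add[OF fin u] by (auto intro!: sum.cong)
    also have "\<dots> = mat_pow V M m u v / of_nat (fact m) * (\<Sum>i\<le>m. of_nat (m choose i) * 1^i * (-1)^(m-i))"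
      unfolding sum_distrib_left
      by (intro sum.cong) (simp_all add: binomial_fact field_simps)
    also have "\<dots> = mat_pow V M m u v / of_nat (fact m) * (1 + (-1))^m"
      by (simp only: binomial_ring)
    finally show ?thesis by simp
  qed
  have "(\<Sum>w\<in>V. mat_exp V M u w * mat_exp V (\<lambda>a b. - M a b) w v) = (\<Sum>m. \<Sum>w\<in>V. c w m)"
    using cauchy sc by (simp add: suminf_sum)
  also have "\<dots> = (\<Sum>m. if m = 0 then mat_pow V M 0 u v else 0)"
    by (simp only: coeff)
  also have "\<dots> = (if u = v then 1 else 0)"
    using sums_single[of 0 "\<lambda>_. mat_pow V M 0 u v"] by (simp add: sums_iff)
  finally show ?thesis .
qed

lemma mat_exp_uminus_skew_hermitian:
  assumes fin: "finite V" and u: "u \<in> V" and w: "w \<in> V"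
    and skew: "\<And>a b. cnj (M a b) = - M b a"
  shows "mat_exp V (\<lambda>a b. - M a b) w u = cnj (mat_exp V M u w)"
proof -
  have "(\<lambda>a b. - M a b) = (\<lambda>a b. cnj (M b a))"
    by (simp add: skew)
  then have "mat_pow V (\<lambda>a b. - M a b) m w u = cnj (mat_pow V M m u w)" for m
    using mat_pow_transpose[OF fin w u, of "\<lambda>a b. cnj (M a b)" m] by (simp add: mat_pow_cnj)
  moreover have "summable (\<lambda>m. mat_pow V M m u w / of_nat (fact m))"
    using mat_exp_summable[OF fin u] by (rule summable_norm_cancel)
  then have "(\<lambda>m. cnj (mat_pow V M m u w / of_nat (fact m))) sums cnj (mat_exp V M u w)"
    unfolding mat_exp_def sums_cnj by (rule summable_sums)
  ultimately show ?thesis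
    unfolding mat_exp_def[of V "\<lambda>a b. - M a b"] by (simp add: sums_iff)
qed

lemma mat_exp_row_norm_skew_hermitian:
  assumes fin: "finite V" and u: "u \<in> V"
    and skew: "\<And>a b. cnj (M a b) = - M b a"
  shows "(\<Sum>w\<in>V. (cmod (mat_exp V M u w))\<^sup>2) = 1"
proof -
  have "complex_of_real (\<Sum>w\<in>V. (cmod (mat_exp V M u w))\<^sup>2)
      = (\<Sum>w\<in>V. mat_exp V M u w * mat_exp V (\<lambda>a b. - M a b) w u)"
    unfolding of_real_sum
    by (intro sum.cong) (simp_all add: mat_exp_uminus_skew_hermitian[OF fin u _ skew]
        complex_norm_square del: of_real_power)
  also have "\<dots> = 1"
    using mat_exp_mult_mat_exp_uminus[OF fin u] by simp
  finally show ?thesis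
    by (metis of_real_eq_1_iff)
qed

lemma mat_exp_unit_entry_unique:
  assumes fin: "finite V" and "u \<in> V" "v \<in> V" "w \<in> V"
    and skew: "\<And>a b. cnj (M a b) = - M b a"
    and "cmod (mat_exp V M u v) = 1" "cmod (mat_exp V M u w) = 1"
  shows "v = w"
proof (rule ccontr)
  assume "v \<noteq> w"
  then have "(\<Sum>x\<in>{v, w}. (cmod (mat_exp V M u x))\<^sup>2) = 2"
    using assms(6,7) by simp
  also have "\<dots> > (\<Sum>x\<in>V. (cmod (mat_exp V M u x))\<^sup>2)"
    using mat_exp_row_norm_skew_hermitian[OF fin assms(2) skew] by simp
  moreover have "(\<Sum>x\<in>{v, w}. (cmod (mat_exp V M u x))\<^sup>2) \<le> (\<Sum>x\<in>V. (cmod (mat_exp V M u x))\<^sup>2)"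
    using assms(3,4) by (intro sum_mono2[OF fin]) auto
  ultimately show False by simp
qed

lemma mat_pow_automorphism:
  assumes bij: "bij_betw f V V" and inv: "\<And>a b. a \<in> V \<Longrightarrow> b \<in> V \<Longrightarrow> M (f a) (f b) = M a b"
    and "u \<in> V" "v \<in> V"
  shows "mat_pow V M m (f u) (f v) = mat_pow V M m u v"
  using assms(3,4)
proof (induction m arbitrary: u)
  case 0
  then show ?case
    using bij_betw_imp_inj_on[OF bij] by (auto dest: inj_onD)
next
  case (Suc m)
  have "mat_pow V M (Suc m) (f u) (f v) = (\<Sum>w\<in>V. M (f u) (f w) * mat_pow V M m (f w) (f v))"
    by (simp add: mat_mult_def sum.reindex_bij_betw[OF bij, of "\<lambda>w. M (f u) w * mat_pow V M m w (f v)"])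
  also have "\<dots> = mat_pow V M (Suc m) u v"
    using Suc inv by (auto simp: mat_mult_def intro!: sum.cong)
  finally show ?case .
qed

lemma transition_automorphism:
  assumes "bij_betw f V V" and "\<And>a b. a \<in> V \<Longrightarrow> b \<in> V \<Longrightarrow> E (f a) (f b) = E a b"
    and "u \<in> V" "v \<in> V"
  shows "transition V E t (f u) (f v) = transition V E t u v"
  unfolding transition_def mat_exp_def
  using mat_pow_automorphism[OF assms(1) _ assms(3,4)] assms(2) by (simp add: adj_matrix_def)

lemma transition_unit_entry_unique:
  assumes "finite V" "u \<in> V" "v \<in> V" "w \<in> V" and "\<And>a b. E a b = E b a"
    and "cmod (transition V E t u v) = 1" "cmod (transition V E t u w) = 1"
  shows "v = w"
  using assms unfolding transition_def
  by (intro mat_exp_unit_entry_unique[OF assms(1-4)]) (auto simp: adj_matrix_def)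

lemma finite_ksubsets: "finite (ksubsets n k)"
  unfolding ksubsets_def by (rule finite_subset[of _ "Pow {1..n}"]) auto

lemma permutes_image_in_ksubsets:
  assumes "p permutes {1..n}" "C \<in> ksubsets n k"
  shows "p ` C \<in> ksubsets n k"
proof -
  have "p ` C \<subseteq> {1..n}"
    using assms permutes_image[OF assms(1)] by (auto simp: ksubsets_def)
  moreover have "card (p ` C) = card C"
    using permutes_inj[OF assms(1)] by (simp add: card_image inj_on_subset)
  ultimately show ?thesis
    using assms(2) by (simp add: ksubsets_def)
qed

lemma permutes_image_ksubsets:
  assumes "p permutes {1..n}"
  shows "bij_betw (image p) (ksubsets n k) (ksubsets n k)"
proof (rule bij_betw_byWitness[where f' = "image (inv p)"])
  have inv: "inv p permutes {1..n}"
    using assms by (rule permutes_inv)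
  show "\<forall>C\<in>ksubsets n k. inv p ` p ` C = C" "\<forall>C\<in>ksubsets n k. p ` inv p ` C = C"
    using permutes_inj[OF assms] permutes_surj[OF assms] by (simp_all add: image_inv_f_f image_f_inv_f)
  show "image p ` ksubsets n k \<subseteq> ksubsets n k" "image (inv p) ` ksubsets n k \<subseteq> ksubsets n k"
    using permutes_image_in_ksubsets[OF assms] permutes_image_in_ksubsets[OF inv] by auto
qed

lemma johnson_union_adj_image:
  assumes "inj p"
  shows "johnson_union_adj S (p ` A) (p ` B) = johnson_union_adj S A B"
  using assms
  by (simp add: johnson_union_adj_def inj_image_eq_iff card_image inj_on_subset flip: image_Int)

lemma exists_transpose_fixing_moving:
  assumes A: "A \<in> ksubsets n k" and B: "B \<in> ksubsets n k"
    and "A \<noteq> B" and "B \<noteq> {1..n} - A"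
  obtains x y where "x \<in> {1..n}" "y \<in> {1..n}" "Transposition.transpose x y ` A = A" "Transposition.transpose x y ` B \<noteq> B"
proof -
  have fin: "finite A" "finite B"
    using A B by (auto simp: ksubsets_def intro: finite_subset)
  have "\<exists>x\<in>{1..n}. \<exists>y\<in>{1..n}. (x \<in> A \<longleftrightarrow> y \<in> A) \<and> x \<in> B \<and> y \<notin> B"
  proof (cases "A \<inter> B = {}")
    case False
    then obtain x where "x \<in> A" "x \<in> B" by blast
    moreover have "\<not> A \<subseteq> B"
      using card_subset_eq[OF fin(2)] A B \<open>A \<noteq> B\<close> by (auto simp: ksubsets_def)
    ultimately show ?thesis
      using A by (auto simp: ksubsets_def)
  next
    case True
    then have "B \<subset> {1..n} - A"
      using B \<open>B \<noteq> {1..n} - A\<close> by (auto simp: ksubsets_def)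
    then obtain y where "y \<in> {1..n}" "y \<notin> A" "y \<notin> B" by blast
    moreover have "B \<noteq> {}"
      using A B \<open>A \<noteq> B\<close> fin by (auto simp: ksubsets_def)
    then obtain x where "x \<in> B" by blast
    moreover have "x \<in> {1..n}" "x \<notin> A"
      using \<open>x \<in> B\<close> True B by (auto simp: ksubsets_def)
    ultimately show ?thesis by blast
  qed
  then obtain x y where xy: "x \<in> {1..n}" "y \<in> {1..n}" "x \<in> A \<longleftrightarrow> y \<in> A" "x \<in> B" "y \<notin> B"
    by blast
  have "y \<in> Transposition.transpose x y ` B"
    using xy(4) by (metis image_eqI transpose_apply_first)
  then show thesis
    using that[OF xy(1,2)] xy(3,5) by auto
qed

theorem mainTheorem16:
  fixes n k :: nat and S :: "nat set" and A B :: "nat set"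
  assumes "1 \<le> k" and "2 * k \<le> n"
    and "S \<subseteq> {0..<k}" and "S \<noteq> {}"
    and "A \<in> ksubsets n k" and "B \<in> ksubsets n k" and "A \<noteq> B"
    and "perfect_state_transfer (ksubsets n k) (johnson_union_adj S) A B"
  shows "B = {1..n} - A"
proof (rule ccontr)
  assume "B \<noteq> {1..n} - A"
  then obtain x y where xy: "x \<in> {1..n}" "y \<in> {1..n}"
    and fix_A: "Transposition.transpose x y ` A = A" and move_B: "Transposition.transpose x y ` B \<noteq> B"
    using exists_transpose_fixing_moving[OF assms(5-7)] by blast
  define p where "p = image (Transposition.transpose x y)"
  have bij: "bij_betw p (ksubsets n k) (ksubsets n k)"
    unfolding p_def using permutes_swap_id[OF xy] by (rule permutes_image_ksubsets)
  have p_adj: "johnson_union_adj S (p C) (p D) = johnson_union_adj S C D" for C D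
    unfolding p_def by (simp add: johnson_union_adj_image)
  have sym: "johnson_union_adj S C D = johnson_union_adj S D C" for C D
    by (auto simp: johnson_union_adj_def Int_commute)
  obtain \<tau> where pst: "cmod (transition (ksubsets n k) (johnson_union_adj S) \<tau> A B) = 1"
    using assms(8) unfolding perfect_state_transfer_def by blast
  moreover have "transition (ksubsets n k) (johnson_union_adj S) \<tau> A (p B)
      = transition (ksubsets n k) (johnson_union_adj S) \<tau> A B"
    using transition_automorphism[OF bij _ assms(5,6), of "johnson_union_adj S"] p_adj fix_A by (simp add: p_def)
  ultimately have "B = p B"
    using bij_betwE[OF bij] assms(5,6) sym
    by (intro transition_unit_entry_unique[OF finite_ksubsets]) auto
  then show False
    using move_B by (simp add: p_def)
qed

end
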